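(* Let $V$ be a $\mathfrak g[t]$-module and $v\in V$ such that $(x_2\otimes t^r)v=0$ for all $r\ge0$, $(h\otimes t^p)v=0$ for all $h\in\mathfrak h$ and all $p\in\mathbb N$ ($p\ge1$), and $Y_2(r,s)v=0$ for all $r,s\in\mathbb Z_+$ with $r+s\ge N$, for some $N\in\mathbb N$. Suppose $(y_2\otimes t^{j+1})v=0$ for some $j\in\mathbb N$. Then for $k\in\mathbb Z_+$: (i) $Y_2(r,s)(y_2\otimes t^j)^kv=0$ for all $r+s\ge N-2k$; (ii) if moreover $(y_3\otimes t^{b+j})v=0$ for some $b\in\mathbb N$ and $(y_1\otimes t^r)v=0$ for all $r\ge0$, then $Y_2(r,s)(y_2\otimes t^j)^k(y_3\otimes t^b)v=0$ for all $r+s\ge N-2k-1$; (iii) if moreover $(x_1\otimes t^{a+j})v=0$ for some $a\in\mathbb N$ and $(x_3\otimes t^r)v=0$ for all $r\ge0$, then $Y_2(r,s)(y_2\otimes t^j)^k(x_1\otimes t^a)v=0$ for all $r+s\ge N-2k-1$; (iv) if moreover $(x_1\otimes t^{a+j})v=0$ and $(y_3\otimes t^{b+j})v=0$ for some $a,b\in\mathbb N$, and $(y_1\otimes t^r)v=0=(x_3\otimes t^r)v$ for all $r\ge0$, then $Y_2(r,s)(y_2\otimes t^j)^k(x_1\otimes t^a)(y_3\otimes t^b)v=0$ for all $r+s\ge N-2k-2$.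
   Context: $\mathfrak g=\mathfrak{sl}(1|2)$ is the Lie superalgebra of $3\times3$ complex supertrace-zero matrices with superbracket $[A,B]=AB-(-1)^{|A||B|}BA$; $x_1=E_{12},x_2=E_{23},x_3=E_{13},y_1=E_{21},y_2=E_{32},y_3=E_{31}$ ($x_2,y_2$ even, the others odd); $\mathfrak h=\operatorname{span}\{E_{11}+E_{22},E_{22}-E_{33}\}$; $\mathfrak g[t]=\mathfrak g\otimes\mathbb C[t]$ with $[a\otimes t^r,b\otimes t^s]=[a,b]\otimes t^{r+s}$. For $u\in U(\mathfrak g[t])$, $u^{(k)}=u^k/k!$, and $Y_2(r,s)=(x_2\otimes t)^{(s)}(y_2\otimes1)^{(r+s)}$ for $r,s\in\mathbb Z_+$. *)

theory Defs
  imports "HOL-Analysis.Analysis"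
begin

section \<open>The Lie superalgebra sl(1|2) as 3x3 complex matrices\<close>

type_synonym mat3 = "complex^3^3"

definition E :: "3 \<Rightarrow> 3 \<Rightarrow> mat3" where
  "E i j = (\<chi> k l. if k = i \<and> l = j then 1 else 0)"

definition msc :: "complex \<Rightarrow> mat3 \<Rightarrow> mat3" where
  "msc c A = (\<chi> i j. c * A $ i $ j)"

definition ipar :: "3 \<Rightarrow> bool" where
  "ipar i = (i \<noteq> 1)"

text \<open>Homogeneous matrices: hom A False = even, hom A True = odd.\<close>
definition hom :: "mat3 \<Rightarrow> bool \<Rightarrow> bool" where
  "hom A p = (\<forall>i j. (ipar i \<noteq> ipar j) \<noteq> p \<longrightarrow> A $ i $ j = 0)"

definition str :: "mat3 \<Rightarrow> complex" where
  "str A = A $ 1 $ 1 - A $ 2 $ 2 - A $ 3 $ 3"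

definition sl12 :: "mat3 set" where
  "sl12 = {A. str A = 0}"

text \<open>Superbracket of homogeneous A (parity p) and B (parity q).\<close>
definition sbr :: "bool \<Rightarrow> bool \<Rightarrow> mat3 \<Rightarrow> mat3 \<Rightarrow> mat3" where
  "sbr p q A B = (if p \<and> q then A ** B + B ** A else A ** B - B ** A)"

definition x1 :: mat3 where "x1 = E 1 2"
definition x2 :: mat3 where "x2 = E 2 3"
definition x3 :: mat3 where "x3 = E 1 3"
definition y1 :: mat3 where "y1 = E 2 1"
definition y2 :: mat3 where "y2 = E 3 2"
definition y3 :: mat3 where "y3 = E 3 1"

definition hsub :: "mat3 set" where
  "hsub = {msc c (E 1 1 + E 2 2) + msc d (E 2 2 - E 3 3) | c d. True}"

text \<open>A g[t]-module: a complex vector space (scalar multiplication sc) together with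
  act a r = the action of a \<otimes> t^r, complex-linear in a \<in> sl(1|2) and in the vector,
  satisfying [a\<otimes>t^r, b\<otimes>t^s] = [a,b]\<otimes>t^(r+s) acting as the supercommutator
  (i.e. a module over U(g[t])).\<close>
definition gt_module ::
  "(complex \<Rightarrow> 'v::ab_group_add \<Rightarrow> 'v) \<Rightarrow> (mat3 \<Rightarrow> nat \<Rightarrow> 'v \<Rightarrow> 'v) \<Rightarrow> bool" where
  "gt_module sc act \<longleftrightarrow>
     module sc \<and>
     (\<forall>a r u w. a \<in> sl12 \<longrightarrow> act a r (u + w) = act a r u + act a r w) \<and>
     (\<forall>a r c u. a \<in> sl12 \<longrightarrow> act a r (sc c u) = sc c (act a r u)) \<and>
     (\<forall>a b r u. a \<in> sl12 \<longrightarrow> b \<in> sl12 \<longrightarrow> act (a + b) r u = act a r u + act b r u) \<and>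
     (\<forall>a c r u. a \<in> sl12 \<longrightarrow> act (msc c a) r u = sc c (act a r u)) \<and>
     (\<forall>a b p q r s u. a \<in> sl12 \<longrightarrow> b \<in> sl12 \<longrightarrow> hom a p \<longrightarrow> hom b q \<longrightarrow>
        act (sbr p q a b) (r + s) u =
          (if p \<and> q then act a r (act b s u) + act b s (act a r u)
           else act a r (act b s u) - act b s (act a r u)))"

text \<open>Y_2(r,s) = (x2\<otimes>t)^(s) (y2\<otimes>1)^(r+s), divided powers u^(k) = u^k/k!.\<close>
definition Y2 :: "(complex \<Rightarrow> 'v \<Rightarrow> 'v) \<Rightarrow> (mat3 \<Rightarrow> nat \<Rightarrow> 'v \<Rightarrow> 'v) \<Rightarrow> nat \<Rightarrow> nat \<Rightarrow> 'v \<Rightarrow> 'v" where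
  "Y2 sc act r s w =
     sc (1 / (of_nat (fact s) * of_nat (fact (r + s))))
        ((act x2 1 ^^ s) ((act y2 0 ^^ (r + s)) w))"

end

theory Submission
  imports Defs "HOL-Library.While_Combinator"
begin

(*
  Write a_r for a \<otimes> t^r and T = y2_0. If A u = 0 and [A, T] is a multiple of some Z commuting with T, then A T^(n+1) u is
  (n+1) times that multiple of Z T^n u; if instead [A, T] = H with H u = 0 and [H, T] a multiple
  of Z, then A T^(n+2) u is a binomial multiple of Z T^n u. Dividing by these factors, and using that
  x2_j, y1_b, x3_a commute with x2_1, gives
    Y2(r,s) y2_j u = - x2_j Y2(r+2,s) u,   Y2(r,s) y3_b u = - y1_b Y2(r+1,s) u,
    Y2(r,s) x1_a u = x3_a Y2(r+1,s) u
  whenever x2_j, h2_j (resp. y1_b, resp. x3_a) kill u. The annihilation conditions on v propagate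
  along the string y2_j^k v, so every factor y2_j lowers the bound N by 2 and every factor y3_b
  or x1_a lowers it by 1.
*)

lemma module_hom_funpow: "module_hom s s f \<Longrightarrow> module_hom s s (f ^^ n)"
  by (induction n) (auto intro: module_hom_compose module.module_hom_id simp: module_hom_iff)

lemma annihilator_funpow:
  fixes T :: "'a::monoid_add \<Rightarrow> 'a"
  assumes "T 0 = 0"
    and "\<And>w. A (T w) = T (A w) + R w"
    and "A u = 0" and "\<And>k. R ((T ^^ k) u) = 0"
  shows "A ((T ^^ k) u) = 0"
  by (induction k) (simp_all add: assms)

context module
begin

lemma commutator_funpow:
  assumes T: "module_hom scale scale T"
    and AT: "\<And>w. A (T w) = T (A w) + scale c (Z w)"
    and ZT: "\<And>w. Z (T w) = T (Z w)"
    and "A u = 0"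
  shows "A ((T ^^ Suc m) u) = scale (of_nat (Suc m) * c) (Z ((T ^^ m) u))"
proof (induction m)
  case 0
  show ?case using AT[of u] \<open>A u = 0\<close> by (simp add: module_hom.zero[OF T])
next
  case (Suc m)
  have "A ((T ^^ Suc (Suc m)) u) = T (A ((T ^^ Suc m) u)) + scale c (Z ((T ^^ Suc m) u))"
    using AT by simp
  also have "\<dots> = scale (of_nat (Suc m) * c + c) (Z ((T ^^ Suc m) u))"
    using Suc.IH ZT by (simp add: module_hom.scale[OF T] scale_left_distrib)
  finally show ?case by (simp add: algebra_simps)
qed

lemma nested_commutator_funpow:
  assumes T: "module_hom scale scale T"
    and AT: "\<And>w. A (T w) = T (A w) + H w"
    and HT: "\<And>w. H (T w) = T (H w) + scale c (Z w)"
    and ZT: "\<And>w. Z (T w) = T (Z w)"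
    and "A u = 0" "H u = 0"
  shows "A ((T ^^ Suc (Suc m)) u) = scale (of_nat (Suc (Suc m) choose 2) * c) (Z ((T ^^ m) u))"
proof (induction m)
  case 0
  have "A (T u) = 0" using AT[of u] assms(5,6) by (simp add: module_hom.zero[OF T])
  then show ?case
    using AT[of "T u"] commutator_funpow[OF T HT ZT \<open>H u = 0\<close>, of 0]
    by (simp add: module_hom.zero[OF T] numeral_2_eq_2)
next
  case (Suc m)
  have "A ((T ^^ Suc (Suc (Suc m))) u) = T (A ((T ^^ Suc (Suc m)) u)) + H ((T ^^ Suc (Suc m)) u)"
    using AT by simp
  also have "\<dots> = scale (of_nat (Suc (Suc m) choose 2) * c + of_nat (Suc (Suc m)) * c)
                     (Z ((T ^^ Suc m) u))"
    using Suc.IH ZT commutator_funpow[OF T HT ZT \<open>H u = 0\<close>, of "Suc m"]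
    by (simp add: module_hom.scale[OF T] scale_left_distrib)
  also have "of_nat (Suc (Suc m) choose 2) * c + of_nat (Suc (Suc m)) * c
      = of_nat (Suc (Suc (Suc m)) choose 2) * c"
    by (simp add: numeral_2_eq_2 algebra_simps)
  finally show ?case .
qed

end

lemma fact_add_eq_fact_pochhammer:
  "(fact (n + d) :: 'a::{comm_semiring_1,semiring_char_0}) = fact n * pochhammer (of_nat n + 1) d"
  unfolding pochhammer_fact pochhammer_product' by (simp add: add.commute)

lemma pochhammer_two_eq_choose:
  "pochhammer (of_nat n + 1) 2 = (of_nat (2 * (Suc (Suc n) choose 2)) :: 'a::comm_semiring_1)"
proof -
  have "2 * (Suc (Suc n) choose 2) = Suc n * Suc (Suc n)"
    by (simp add: choose_two)
  then show ?thesis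
    by (simp add: pochhammer_Suc numeral_2_eq_2 algebra_simps)
qed

text \<open>\<open>h2 = [x2, y2]\<close> and \<open>h3 = [x3, y3]\<close>.\<close>

definition h2 :: mat3 where "h2 = E 2 2 - E 3 3"
definition h3 :: mat3 where "h3 = E 1 1 + E 3 3"

lemmas mat3_simps = vec_eq_iff forall_3 sum_3 matrix_matrix_mult_def E_def msc_def
  x1_def x2_def x3_def y1_def y2_def y3_def h2_def h3_def hom_def ipar_def sl12_def str_def

lemma in_sl12 [simp]:
  "x1 \<in> sl12" "x2 \<in> sl12" "x3 \<in> sl12" "y1 \<in> sl12" "y2 \<in> sl12" "y3 \<in> sl12"
  "h2 \<in> sl12" "h3 \<in> sl12" "0 \<in> sl12"
  by (simp_all add: mat3_simps)

lemma hom_generators: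
  "hom x2 False" "hom y2 False" "hom h2 False" "hom h3 False"
  "hom x1 True" "hom x3 True" "hom y1 True" "hom y3 True"
  by (simp_all add: mat3_simps)

lemma h2_h3_in_hsub: "h2 \<in> hsub" "h3 \<in> hsub"
proof -
  have "h2 = msc 0 (E 1 1 + E 2 2) + msc 1 (E 2 2 - E 3 3)"
    "h3 = msc 1 (E 1 1 + E 2 2) + msc (-1) (E 2 2 - E 3 3)"
    by (simp_all add: mat3_simps)
  then show "h2 \<in> hsub" "h3 \<in> hsub"
    unfolding hsub_def by blast+
qed

locale gt_representation =
  fixes sc :: "complex \<Rightarrow> 'v::ab_group_add \<Rightarrow> 'v" and act :: "mat3 \<Rightarrow> nat \<Rightarrow> 'v \<Rightarrow> 'v"
  assumes gt_module: "gt_module sc act"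
begin

sublocale module sc
  using gt_module unfolding gt_module_def by blast

lemma act_hom: "a \<in> sl12 \<Longrightarrow> module_hom sc sc (act a r)"
  using gt_module by (simp add: gt_module_def module_hom_iff)

lemmas act_zero [simp] = module_hom.zero[OF act_hom]
  and act_funpow_scale [simp] = module_hom.scale[OF module_hom_funpow[OF act_hom]]

lemma act_msc: "a \<in> sl12 \<Longrightarrow> act (msc c a) r u = sc c (act a r u)"
  using gt_module unfolding gt_module_def by blast

lemma act_zero_mat [simp]: "act 0 r u = 0"
  using gt_module unfolding gt_module_def
  by (metis add.right_neutral add_cancel_right_right in_sl12(9))

lemma act_commutator:
  assumes "a \<in> sl12" "b \<in> sl12" "hom a False" "hom b q"
  shows "act a r (act b s u) = act b s (act a r u) + act (a ** b - b ** a) (r + s) u"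
proof -
  have "act (sbr False q a b) (r + s) u = act a r (act b s u) - act b s (act a r u)"
    using gt_module assms unfolding gt_module_def by simp
  then show ?thesis by (simp add: sbr_def algebra_simps)
qed

lemma act_anticommutator:
  assumes "a \<in> sl12" "b \<in> sl12" "hom a True" "hom b True"
  shows "act a r (act b s u) = act (a ** b + b ** a) (r + s) u - act b s (act a r u)"
proof -
  have "act (sbr True True a b) (r + s) u = act a r (act b s u) + act b s (act a r u)"
    using gt_module assms unfolding gt_module_def by simp
  then show ?thesis by (simp add: sbr_def algebra_simps)
qed

lemma comm_x2_y2: "act x2 r (act y2 s u) = act y2 s (act x2 r u) + act h2 (r + s) u"
proof -
  have "x2 ** y2 - y2 ** x2 = h2" by (simp add: mat3_simps)
  then show ?thesis using act_commutator[of x2 y2] hom_generators by simp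
qed

lemma comm_h2_y2: "act h2 r (act y2 s u) = act y2 s (act h2 r u) + sc (-2) (act y2 (r + s) u)"
proof -
  have "h2 ** y2 - y2 ** h2 = msc (-2) y2" by (simp add: mat3_simps)
  then show ?thesis using act_commutator[of h2 y2] hom_generators by (simp add: act_msc)
qed

lemma comm_h3_y2: "act h3 r (act y2 s u) = act y2 s (act h3 r u) + act y2 (r + s) u"
proof -
  have "h3 ** y2 - y2 ** h3 = y2" by (simp add: mat3_simps)
  then show ?thesis using act_commutator[of h3 y2] hom_generators by simp
qed

lemma comm_y1_y2: "act y1 r (act y2 s u) = act y2 s (act y1 r u) - act y3 (r + s) u"
proof -
  have "y2 ** y1 - y1 ** y2 = y3" by (simp add: mat3_simps)
  then show ?thesis using act_commutator[of y2 y1 True s r u] hom_generators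
    by (simp add: algebra_simps)
qed

lemma comm_x3_y2: "act x3 r (act y2 s u) = act y2 s (act x3 r u) + act x1 (r + s) u"
proof -
  have "y2 ** x3 - x3 ** y2 = msc (-1) x1" by (simp add: mat3_simps)
  then show ?thesis using act_commutator[of y2 x3 True s r u] hom_generators
    by (simp add: act_msc algebra_simps)
qed

lemma anticomm_x3_y3: "act x3 r (act y3 s u) = act h3 (r + s) u - act y3 s (act x3 r u)"
proof -
  have "x3 ** y3 + y3 ** x3 = h3" by (simp add: mat3_simps)
  then show ?thesis using act_anticommutator[of x3 y3] hom_generators by simp
qed

lemma commuting_pairs:
  "act y2 r (act y2 s u) = act y2 s (act y2 r u)"
  "act x2 r (act x2 s u) = act x2 s (act x2 r u)"
  "act y3 r (act y2 s u) = act y2 s (act y3 r u)"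
  "act x1 r (act y2 s u) = act y2 s (act x1 r u)"
  "act y1 r (act x2 s u) = act x2 s (act y1 r u)"
  "act x3 r (act x2 s u) = act x2 s (act x3 r u)"
proof -
  have "y2 ** y2 - y2 ** y2 = 0" "x2 ** x2 - x2 ** x2 = 0" "y2 ** y3 - y3 ** y2 = 0"
    "y2 ** x1 - x1 ** y2 = 0" "x2 ** y1 - y1 ** x2 = 0" "x2 ** x3 - x3 ** x2 = 0"
    by (simp_all add: mat3_simps)
  then show
    "act y2 r (act y2 s u) = act y2 s (act y2 r u)"
    "act x2 r (act x2 s u) = act x2 s (act x2 r u)"
    "act y3 r (act y2 s u) = act y2 s (act y3 r u)"
    "act x1 r (act y2 s u) = act y2 s (act x1 r u)"
    "act y1 r (act x2 s u) = act x2 s (act y1 r u)"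
    "act x3 r (act x2 s u) = act x2 s (act x3 r u)"
    using act_commutator[of y2 y2 False r s u] act_commutator[of x2 x2 False r s u]
      act_commutator[of y2 y3 True s r u] act_commutator[of y2 x1 True s r u]
      act_commutator[of x2 y1 True s r u] act_commutator[of x2 x3 True s r u]
      hom_generators
    by simp_all
qed

lemma Y2_transfer:
  assumes A: "module_hom sc sc A"
    and AX: "\<And>w. A (act x2 1 w) = act x2 1 (A w)"
    and ZT: "\<And>w. Z (act y2 0 w) = act y2 0 (Z w)"
    and AT: "\<And>n. A ((act y2 0 ^^ (n + d)) u)
               = sc (pochhammer (of_nat n + 1) d * c) (Z ((act y2 0 ^^ n) u))"
    and "c \<noteq> 0"
  shows "Y2 sc act r s (Z u) = sc (1 / c) (A (Y2 sc act (r + d) s u))"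
proof -
  let ?X = "act x2 1 ^^ s" and ?T = "act y2 0"
  define n where "n = r + s"
  have fact_nd: "fact (n + d) = fact n * pochhammer (of_nat n + 1) d"
    by (rule fact_add_eq_fact_pochhammer)
  then have "pochhammer (of_nat n + 1) d \<noteq> (0 :: complex)"
    by (metis fact_nonzero mult_zero_right)
  have "(?T ^^ n) (Z u) = Z ((?T ^^ n) u)"
    by (rule funpow_commute[symmetric]) (simp add: ZT)
  also have "\<dots> = sc (1 / (pochhammer (of_nat n + 1) d * c)) (A ((?T ^^ (n + d)) u))"
    using AT[of n] \<open>c \<noteq> 0\<close> \<open>pochhammer (of_nat n + 1) d \<noteq> 0\<close> by (simp add: scale_scale)
  finally have lhs: "Y2 sc act r s (Z u)
      = sc (1 / (fact s * fact n) * (1 / (pochhammer (of_nat n + 1) d * c)))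
          (?X (A ((?T ^^ (n + d)) u)))"
    by (simp add: Y2_def n_def scale_scale)
  also have "?X (A ((?T ^^ (n + d)) u)) = A (?X ((?T ^^ (n + d)) u))"
    by (rule funpow_commute[symmetric]) (intro allI impI AX)
  also have "1 / (fact s * fact n) * (1 / (pochhammer (of_nat n + 1) d * c))
      = 1 / c * (1 / (fact s * fact (n + d)) :: complex)"
    by (simp add: fact_nd)
  also have "sc (1 / c * (1 / (fact s * fact (n + d)))) (A (?X ((?T ^^ (n + d)) u)))
      = sc (1 / c) (A (Y2 sc act (r + d) s u))"
    unfolding Y2_def n_def by (simp add: module_hom.scale[OF A] scale_scale add_ac)
  finally show ?thesis .
qed

lemma Y2_y2_shift:
  assumes "act x2 p u = 0" "act h2 p u = 0"
  shows "Y2 sc act r s (act y2 p u) = - act x2 p (Y2 sc act (r + 2) s u)"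
proof -
  have "act x2 p ((act y2 0 ^^ (n + 2)) u)
      = sc (pochhammer (of_nat n + 1) 2 * (-1)) (act y2 p ((act y2 0 ^^ n) u))" for n
  proof -
    have "act x2 p ((act y2 0 ^^ Suc (Suc n)) u)
        = sc (of_nat (Suc (Suc n) choose 2) * (-2)) (act y2 p ((act y2 0 ^^ n) u))"
      by (rule nested_commutator_funpow[where A = "act x2 p" and H = "act h2 p" and Z = "act y2 p"])
        (simp_all add: act_hom comm_x2_y2 comm_h2_y2 commuting_pairs assms)
    moreover have "of_nat (Suc (Suc n) choose 2) * (-2)
        = (pochhammer (of_nat n + 1) 2 * (-1) :: complex)"
      by (simp only: pochhammer_two_eq_choose) simp
    ultimately show ?thesis
      by (simp only: add_2_eq_Suc')
  qed
  then have "Y2 sc act r s (act y2 p u) = sc (1 / -1) (act x2 p (Y2 sc act (r + 2) s u))"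
    by (intro Y2_transfer) (simp_all add: act_hom commuting_pairs)
  then show ?thesis
    by (simp add: scale_minus_left)
qed

lemma Y2_y3_shift:
  assumes "act y1 p u = 0"
  shows "Y2 sc act r s (act y3 p u) = - act y1 p (Y2 sc act (r + 1) s u)"
proof -
  have "act y1 p ((act y2 0 ^^ Suc n) u) = sc (of_nat (Suc n) * (-1)) (act y3 p ((act y2 0 ^^ n) u))"
    for n
    by (rule commutator_funpow[where A = "act y1 p" and Z = "act y3 p"])
      (simp_all add: act_hom comm_y1_y2 commuting_pairs assms scale_minus_left)
  then have "act y1 p ((act y2 0 ^^ (n + 1)) u)
      = sc (pochhammer (of_nat n + 1) 1 * (-1)) (act y3 p ((act y2 0 ^^ n) u))" for n
    by (simp add: add.commute)
  then have "Y2 sc act r s (act y3 p u) = sc (1 / -1) (act y1 p (Y2 sc act (r + 1) s u))"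
    by (intro Y2_transfer) (simp_all add: act_hom commuting_pairs)
  then show ?thesis
    by (simp add: scale_minus_left)
qed

lemma Y2_x1_shift:
  assumes "act x3 p u = 0"
  shows "Y2 sc act r s (act x1 p u) = act x3 p (Y2 sc act (r + 1) s u)"
proof -
  have "act x3 p ((act y2 0 ^^ Suc n) u) = sc (of_nat (Suc n) * 1) (act x1 p ((act y2 0 ^^ n) u))"
    for n
    by (rule commutator_funpow[where A = "act x3 p" and Z = "act x1 p"])
      (simp_all add: act_hom comm_x3_y2 commuting_pairs assms)
  then have "act x3 p ((act y2 0 ^^ (n + 1)) u)
      = sc (pochhammer (of_nat n + 1) 1 * 1) (act x1 p ((act y2 0 ^^ n) u))" for n
    by (simp add: add.commute)
  then have "Y2 sc act r s (act x1 p u) = sc (1 / 1) (act x3 p (Y2 sc act (r + 1) s u))"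
    by (intro Y2_transfer) (simp_all add: act_hom commuting_pairs)
  then show ?thesis
    by simp
qed

end

locale truncated_highest_weight = gt_representation +
  fixes v and j :: nat
  assumes x2_v: "act x2 r v = 0"
    and hsub_v: "h \<in> hsub \<Longrightarrow> 1 \<le> p \<Longrightarrow> act h p v = 0"
    and y2_v: "act y2 (j + 1) v = 0"
    and j_pos: "1 \<le> j"
begin

abbreviation w where
  "w k \<equiv> (act y2 j ^^ k) v"

lemma y2_high_kills_v:
  assumes "j + 1 \<le> m"
  shows "act y2 m v = 0"
proof (cases "m = j + 1")
  case True
  then show ?thesis using y2_v by simp
next
  case False
  define q where "q = m - (j + 1)"
  have "1 \<le> q" "q + (j + 1) = m"
    using False assms by (auto simp: q_def)
  then have "sc (-2) (act y2 m v) = 0"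
    using comm_h2_y2[of q "j + 1" v] y2_v hsub_v[OF h2_h3_in_hsub(1)] by simp
  then have "sc (-1/2) (sc (-2) (act y2 m v)) = 0"
    by simp
  then show ?thesis
    by (simp add: scale_scale)
qed

lemma y2_high_kills_w: "j + 1 \<le> m \<Longrightarrow> act y2 m (w k) = 0"
  by (rule annihilator_funpow[where A = "act y2 m" and T = "act y2 j" and R = "\<lambda>_. 0"])
    (simp_all add: commuting_pairs y2_high_kills_v)

lemma h2_kills_w: "1 \<le> q \<Longrightarrow> act h2 q (w k) = 0"
  by (rule annihilator_funpow[where A = "act h2 q" and T = "act y2 j"
        and R = "\<lambda>u. sc (-2) (act y2 (q + j) u)"])
    (simp_all add: comm_h2_y2 hsub_v h2_h3_in_hsub y2_high_kills_w)

lemma h3_kills_w: "1 \<le> q \<Longrightarrow> act h3 q (w k) = 0"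
  by (rule annihilator_funpow[where A = "act h3 q" and T = "act y2 j" and R = "act y2 (q + j)"])
    (simp_all add: comm_h3_y2 hsub_v h2_h3_in_hsub y2_high_kills_w)

lemma x2_kills_w: "act x2 r (w k) = 0"
  using j_pos
  by (intro annihilator_funpow[where A = "act x2 r" and T = "act y2 j" and R = "act h2 (r + j)"])
    (simp_all add: comm_x2_y2 x2_v h2_kills_w)

lemma y1_kills_w:
  assumes "\<And>r. act y1 r v = 0" and "act y3 (b + j) v = 0"
  shows "act y1 b (w k) = 0"
proof -
  have "act y3 (b + j) (w k) = 0" for k
    by (rule annihilator_funpow[where A = "act y3 (b + j)" and T = "act y2 j" and R = "\<lambda>_. 0"])
      (simp_all add: commuting_pairs assms)
  then show ?thesis
    by (intro annihilator_funpow[where A = "act y1 b" and T = "act y2 j"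
          and R = "\<lambda>u. - act y3 (b + j) u"])
      (simp_all add: comm_y1_y2 assms)
qed

lemma x3_kills_w:
  assumes "\<And>r. act x3 r v = 0" and "act x1 (a + j) v = 0"
  shows "act x3 a (w k) = 0"
proof -
  have "act x1 (a + j) (w k) = 0" for k
    by (rule annihilator_funpow[where A = "act x1 (a + j)" and T = "act y2 j" and R = "\<lambda>_. 0"])
      (simp_all add: commuting_pairs assms)
  then show ?thesis
    by (intro annihilator_funpow[where A = "act x3 a" and T = "act y2 j" and R = "act x1 (a + j)"])
      (simp_all add: comm_x3_y2 assms)
qed

lemma Y2_kills_w:
  assumes "\<And>r s. N \<le> r + s \<Longrightarrow> Y2 sc act r s v = 0"
    and "int N - 2 * int k \<le> int (r + s)"
  shows "Y2 sc act r s (w k) = 0"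
  using assms(2)
proof (induction k arbitrary: r)
  case 0
  then show ?case using assms(1) by simp
next
  case (Suc k)
  have "Y2 sc act r s (w (Suc k)) = - act x2 j (Y2 sc act (r + 2) s (w k))"
    using Y2_y2_shift[OF x2_kills_w h2_kills_w[OF j_pos]] by simp
  also have "Y2 sc act (r + 2) s (w k) = 0"
    using Suc by simp
  finally show ?case by simp
qed

lemma Y2_kills_w_y3:
  assumes "\<And>r. act y1 r v = 0" and "act y3 (b + j) v = 0"
    and "Y2 sc act (r + 1) s (w k) = 0"
  shows "Y2 sc act r s ((act y2 j ^^ k) (act y3 b v)) = 0"
proof -
  have "(act y2 j ^^ k) (act y3 b v) = act y3 b (w k)"
    by (rule funpow_commute[symmetric]) (simp add: commuting_pairs)
  then show ?thesis
    using Y2_y3_shift[OF y1_kills_w[OF assms(1,2)]] assms(3) by simp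
qed

lemma Y2_kills_w_x1:
  assumes "\<And>r. act x3 r v = 0" and "act x1 (a + j) v = 0"
    and "Y2 sc act (r + 1) s (w k) = 0"
  shows "Y2 sc act r s ((act y2 j ^^ k) (act x1 a v)) = 0"
proof -
  have "(act y2 j ^^ k) (act x1 a v) = act x1 a (w k)"
    by (rule funpow_commute[symmetric]) (simp add: commuting_pairs)
  then show ?thesis
    using Y2_x1_shift[OF x3_kills_w[OF assms(1,2)]] assms(3) by simp
qed

lemma Y2_kills_w_x1_y3:
  assumes "\<And>r. act y1 r v = 0" and "\<And>r. act x3 r v = 0"
    and "act x1 (a + j) v = 0" and "act y3 (b + j) v = 0" and "1 \<le> a + b"
    and "Y2 sc act (r + 2) s (w k) = 0"
  shows "Y2 sc act r s ((act y2 j ^^ k) (act x1 a (act y3 b v))) = 0"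
proof -
  have "(act y2 j ^^ k) (act x1 a (act y3 b v)) = act x1 a ((act y2 j ^^ k) (act y3 b v))"
    by (rule funpow_commute[symmetric]) (simp add: commuting_pairs)
  also have "(act y2 j ^^ k) (act y3 b v) = act y3 b (w k)"
    by (rule funpow_commute[symmetric]) (simp add: commuting_pairs)
  finally have "(act y2 j ^^ k) (act x1 a (act y3 b v)) = act x1 a (act y3 b (w k))" .
  moreover have "act x3 a (act y3 b (w k)) = 0"
    using anticomm_x3_y3[of a b "w k"] h3_kills_w[OF assms(5)] x3_kills_w[OF assms(2,3)] by simp
  ultimately have "Y2 sc act r s ((act y2 j ^^ k) (act x1 a (act y3 b v)))
      = act x3 a (- act y1 b (Y2 sc act (r + 1 + 1) s (w k)))"
    by (simp add: Y2_x1_shift Y2_y3_shift y1_kills_w assms(1,4))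
  then show ?thesis
    using assms(6) by (simp add: numeral_2_eq_2)
qed

end

theorem mainTheorem4:
  fixes sc :: "complex \<Rightarrow> 'v::ab_group_add \<Rightarrow> 'v"
    and act :: "mat3 \<Rightarrow> nat \<Rightarrow> 'v \<Rightarrow> 'v"
    and v :: 'v and N j :: nat
  assumes "gt_module sc act"
    and "\<forall>r. act x2 r v = 0"
    and "\<forall>h\<in>hsub. \<forall>p\<ge>1. act h p v = 0"
    and "N \<ge> 1"
    and "\<forall>r s. r + s \<ge> N \<longrightarrow> Y2 sc act r s v = 0"
    and "j \<ge> 1"
    and "act y2 (j + 1) v = 0"
  shows "\<forall>k::nat.
     (\<forall>r s. int (r + s) \<ge> int N - 2 * int k \<longrightarrow>
        Y2 sc act r s ((act y2 j ^^ k) v) = 0)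
   \<and> (\<forall>b\<ge>1. act y3 (b + j) v = 0 \<longrightarrow> (\<forall>r. act y1 r v = 0) \<longrightarrow>
        (\<forall>r s. int (r + s) \<ge> int N - 2 * int k - 1 \<longrightarrow>
           Y2 sc act r s ((act y2 j ^^ k) (act y3 b v)) = 0))
   \<and> (\<forall>a\<ge>1. act x1 (a + j) v = 0 \<longrightarrow> (\<forall>r. act x3 r v = 0) \<longrightarrow>
        (\<forall>r s. int (r + s) \<ge> int N - 2 * int k - 1 \<longrightarrow>
           Y2 sc act r s ((act y2 j ^^ k) (act x1 a v)) = 0))
   \<and> (\<forall>a\<ge>1. \<forall>b\<ge>1. act x1 (a + j) v = 0 \<longrightarrow> act y3 (b + j) v = 0 \<longrightarrow>
        (\<forall>r. act y1 r v = 0) \<longrightarrow> (\<forall>r. act x3 r v = 0) \<longrightarrow>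
        (\<forall>r s. int (r + s) \<ge> int N - 2 * int k - 2 \<longrightarrow>
           Y2 sc act r s ((act y2 j ^^ k) (act x1 a (act y3 b v))) = 0))"
proof -
  interpret truncated_highest_weight sc act v j
    by unfold_locales (use assms in auto)
  have Y2_w: "Y2 sc act r s ((act y2 j ^^ k) v) = 0" if "int N - 2 * int k \<le> int (r + s)" for r s k
    using Y2_kills_w[of N] assms(5) that by blast
  show ?thesis
    by (auto intro!: Y2_w Y2_kills_w_y3 Y2_kills_w_x1 Y2_kills_w_x1_y3)
qed

end
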